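(* Let $\mathfrak{n}$ be the real $7$-dimensional Lie algebra with basis $e_1,\dots,e_7$ whose nonzero brackets (up to antisymmetry) are $[e_1,e_2]=e_3$, $[e_1,e_3]=e_4$, $[e_1,e_4]=e_6$, $[e_1,e_6]=e_7$, $[e_2,e_3]=e_5$, $[e_2,e_5]=e_6$, $[e_2,e_6]=e_7$, $[e_3,e_4]=-e_7$, $[e_3,e_5]=e_7$. Then $\mathfrak{n}$ is an Einstein nilradical.
   Context: A real nilpotent Lie algebra $\mathfrak{n}$ is called an Einstein nilradical if it admits an inner product such that the left-invariant Riemannian metric it defines on the simply connected nilpotent Lie group with Lie algebra $\mathfrak{n}$ is a nilsoliton, i.e. its Ricci operator satisfies $\mathrm{Ric}=c\,\mathrm{Id}+D$ for some $c\in\mathbb{R}$ and some derivation $D$ of $\mathfrak{n}$. Brackets of basis elements not listed are zero. *)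

theory Defs
  imports "HOL-Analysis.Analysis"
begin

definition lie_bracket :: "(real^'n \<Rightarrow> real^'n \<Rightarrow> real^'n) \<Rightarrow> bool" where
  "lie_bracket br \<longleftrightarrow> bilinear br \<and> (\<forall>x. br x x = 0) \<and>
     (\<forall>x y z. br x (br y z) + br y (br z x) + br z (br x y) = 0)"

definition nilpotent_lie :: "(real^'n \<Rightarrow> real^'n \<Rightarrow> real^'n) \<Rightarrow> bool" where
  "nilpotent_lie br \<longleftrightarrow> (\<exists>k. \<forall>xs y. length xs = k \<longrightarrow> foldr br xs y = 0)"

definition derivation :: "(real^'n \<Rightarrow> real^'n \<Rightarrow> real^'n) \<Rightarrow> (real^'n \<Rightarrow> real^'n) \<Rightarrow> bool" where
  "derivation br D \<longleftrightarrow> linear D \<and> (\<forall>x y. D (br x y) = br (D x) y + br x (D y))"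

definition inner_product :: "(real^'n \<Rightarrow> real^'n \<Rightarrow> real) \<Rightarrow> bool" where
  "inner_product g \<longleftrightarrow> bilinear g \<and> (\<forall>x y. g x y = g y x) \<and> (\<forall>x. x \<noteq> 0 \<longrightarrow> g x x > 0)"

text \<open>Levi-Civita connection on left-invariant vector fields, via the Koszul formula.\<close>
definition levi_civita ::
  "(real^'n \<Rightarrow> real^'n \<Rightarrow> real) \<Rightarrow> (real^'n \<Rightarrow> real^'n \<Rightarrow> real^'n) \<Rightarrow> real^'n \<Rightarrow> real^'n \<Rightarrow> real^'n" where
  "levi_civita g br X Y = (THE W. \<forall>Z. 2 * g W Z = g (br X Y) Z - g (br Y Z) X + g (br Z X) Y)"

definition curvature ::
  "(real^'n \<Rightarrow> real^'n \<Rightarrow> real) \<Rightarrow> (real^'n \<Rightarrow> real^'n \<Rightarrow> real^'n) \<Rightarrow> real^'n \<Rightarrow> real^'n \<Rightarrow> real^'n \<Rightarrow> real^'n" where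
  "curvature g br X Y Z =
     levi_civita g br X (levi_civita g br Y Z) - levi_civita g br Y (levi_civita g br X Z)
     - levi_civita g br (br X Y) Z"

definition ricci_tensor ::
  "(real^'n \<Rightarrow> real^'n \<Rightarrow> real) \<Rightarrow> (real^'n \<Rightarrow> real^'n \<Rightarrow> real^'n) \<Rightarrow> real^'n \<Rightarrow> real^'n \<Rightarrow> real" where
  "ricci_tensor g br Y Z = trace (matrix (\<lambda>X. curvature g br X Y Z))"

definition ricci_operator ::
  "(real^'n \<Rightarrow> real^'n \<Rightarrow> real) \<Rightarrow> (real^'n \<Rightarrow> real^'n \<Rightarrow> real^'n) \<Rightarrow> real^'n \<Rightarrow> real^'n" where
  "ricci_operator g br Y = (THE W. \<forall>Z. g W Z = ricci_tensor g br Y Z)"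

definition nilsoliton ::
  "(real^'n \<Rightarrow> real^'n \<Rightarrow> real) \<Rightarrow> (real^'n \<Rightarrow> real^'n \<Rightarrow> real^'n) \<Rightarrow> bool" where
  "nilsoliton g br \<longleftrightarrow>
     (\<exists>(c::real) D. derivation br D \<and> (\<forall>X. ricci_operator g br X = c *\<^sub>R X + D X))"

definition einstein_nilradical :: "(real^'n \<Rightarrow> real^'n \<Rightarrow> real^'n) \<Rightarrow> bool" where
  "einstein_nilradical br \<longleftrightarrow> lie_bracket br \<and> nilpotent_lie br \<and>
     (\<exists>g. inner_product g \<and> nilsoliton g br)"

text \<open>Coordinates x\$1, ..., x\$7 w.r.t. e_1..e_7 (note (7::7) = 0, which is a distinct index).\<close>
definition brk7 :: "real^7 \<Rightarrow> real^7 \<Rightarrow> real^7" where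
  "brk7 x y = vector
     [0, 0,
      x$1 * y$2 - x$2 * y$1,
      x$1 * y$3 - x$3 * y$1,
      x$2 * y$3 - x$3 * y$2,
      (x$1 * y$4 - x$4 * y$1) + (x$2 * y$5 - x$5 * y$2),
      (x$1 * y$6 - x$6 * y$1) + (x$2 * y$6 - x$6 * y$2)
        - (x$3 * y$4 - x$4 * y$3) + (x$3 * y$5 - x$5 * y$3)]"

end

theory Submission
  imports Defs
begin

text \<open>Give \<open>e\<^sub>1, e\<^sub>2\<close> degree 1, \<open>e\<^sub>3\<close> degree 2, \<open>e\<^sub>4, e\<^sub>5\<close> degree 3,
  \<open>e\<^sub>6\<close> degree 4 and \<open>e\<^sub>7\<close> degree 5. Every bracket \<open>[e\<^sub>i, e\<^sub>j]\<close> is homogeneous of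
  degree \<open>deg e\<^sub>i + deg e\<^sub>j\<close>, so brackets of length five vanish and the operator \<open>D\<close>
  multiplying degree \<open>k\<close> by \<open>k\<close> is a derivation. The nilsoliton metric is not diagonal in
  the basis \<open>e\<^sub>i\<close>: it couples \<open>e\<^sub>1\<close> with \<open>e\<^sub>2\<close> and \<open>e\<^sub>4\<close> with \<open>e\<^sub>5\<close>.
  Solving the Koszul formula for it gives the Levi-Civita connection explicitly, and tracing
  the curvature yields \<open>Ric = -45/16 Id + 171/208 D\<close>.\<close>

lemma inner_product_eqI:
  assumes "inner_product g" and "\<And>Z. g W Z = g W' Z"
  shows "W = W'"
proof -
  from assms(1) have "bilinear g" and pos: "\<And>x. x \<noteq> 0 \<Longrightarrow> g x x > 0"
    unfolding inner_product_def by auto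
  then have "g (W - W') (W - W') = 0"
    using assms(2) by (simp add: bilinear_lsub)
  then show ?thesis
    using pos[of "W - W'"] by auto
qed

lemma levi_civita_eqI:
  assumes "inner_product g"
    and "\<And>Z. 2 * g W Z = g (br X Y) Z - g (br Y Z) X + g (br Z X) Y"
  shows "levi_civita g br X Y = W"
  unfolding levi_civita_def
proof (rule the_equality)
  fix W' assume "\<forall>Z. 2 * g W' Z = g (br X Y) Z - g (br Y Z) X + g (br Z X) Y"
  with assms(2) have "\<And>Z. g W' Z = g W Z" by (metis mult_cancel_left zero_neq_numeral)
  with assms(1) show "W' = W" by (rule inner_product_eqI)
qed (use assms(2) in blast)

lemma ricci_operator_eqI:
  assumes "inner_product g" and "\<And>Z. g W Z = ricci_tensor g br Y Z"
  shows "ricci_operator g br Y = W"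
  unfolding ricci_operator_def
proof (rule the_equality)
  fix W' assume "\<forall>Z. g W' Z = ricci_tensor g br Y Z"
  with assms(2) have "\<And>Z. g W' Z = g W Z" by simp
  with assms(1) show "W' = W" by (rule inner_product_eqI)
qed (use assms(2) in blast)

lemma nilsolitonI:
  assumes "inner_product g" and "derivation br D"
    and "\<And>Y Z. ricci_tensor g br Y Z = g (c *\<^sub>R Y + D Y) Z"
  shows "nilsoliton g br"
  unfolding nilsoliton_def
  using assms ricci_operator_eqI[OF assms(1)] by metis

lemma trace_matrix: "trace (matrix f) = (\<Sum>i\<in>UNIV. f (axis i 1) $ i)"
  by (simp add: trace_def matrix_def)

lemma nilpotent_lieI:
  assumes "\<And>y. P 0 y" and "\<And>i x y. P i y \<Longrightarrow> P (Suc i) (br x y)"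
    and "\<And>y. P k y \<Longrightarrow> y = 0"
  shows "nilpotent_lie br"
proof -
  have "P (length xs) (foldr br xs y)" for xs y
    by (induction xs) (simp_all add: assms(1,2))
  then show ?thesis
    unfolding nilpotent_lie_def using assms(3) by (metis (full_types))
qed

lemma exhaust_7:
  fixes x :: 7
  shows "x = 1 \<or> x = 2 \<or> x = 3 \<or> x = 4 \<or> x = 5 \<or> x = 6 \<or> x = 7"
proof (induct x)
  case (of_int z)
  then have "z = 0 \<or> z = 1 \<or> z = 2 \<or> z = 3 \<or> z = 4 \<or> z = 5 \<or> z = 6" by fastforce
  then show ?case by auto
qed

lemma forall_7: "(\<forall>i::7. P i) \<longleftrightarrow> P 1 \<and> P 2 \<and> P 3 \<and> P 4 \<and> P 5 \<and> P 6 \<and> P 7"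
  by (metis exhaust_7)

lemma UNIV_7: "UNIV = {1, 2, 3, 4, 5, 6, 7::7}"
  using exhaust_7 by auto

lemma sum_7: "sum f (UNIV::7 set) = f 1 + f 2 + f 3 + f 4 + f 5 + f 6 + f 7"
  unfolding UNIV_7 by (simp add: ac_simps)

lemma vec_eq_iff_7:
  "(x::'a^7) = y \<longleftrightarrow>
     x$1 = y$1 \<and> x$2 = y$2 \<and> x$3 = y$3 \<and> x$4 = y$4 \<and> x$5 = y$5 \<and> x$6 = y$6 \<and> x$7 = y$7"
  by (simp add: vec_eq_iff forall_7)

lemma vector_7 [simp]:
  "(vector [a1, a2, a3, a4, a5, a6, a7] :: 'a::zero^7) $ 1 = a1"
  "(vector [a1, a2, a3, a4, a5, a6, a7] :: 'a^7) $ 2 = a2"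
  "(vector [a1, a2, a3, a4, a5, a6, a7] :: 'a^7) $ 3 = a3"
  "(vector [a1, a2, a3, a4, a5, a6, a7] :: 'a^7) $ 4 = a4"
  "(vector [a1, a2, a3, a4, a5, a6, a7] :: 'a^7) $ 5 = a5"
  "(vector [a1, a2, a3, a4, a5, a6, a7] :: 'a^7) $ 6 = a6"
  "(vector [a1, a2, a3, a4, a5, a6, a7] :: 'a^7) $ 7 = a7"
  by (simp_all add: vector_def)

lemma lie_bracket_brk7: "lie_bracket brk7"
  unfolding lie_bracket_def bilinear_def linear_iff
  by (simp add: vec_eq_iff_7 brk7_def algebra_simps)

definition deg7 :: "7 \<Rightarrow> nat" where
  "deg7 j = (if j = 1 \<or> j = 2 then 1 else if j = 3 then 2 else if j = 4 \<or> j = 5 then 3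
     else if j = 6 then 4 else 5)"

lemma deg7_simps [simp]:
  "deg7 1 = 1" "deg7 2 = 1" "deg7 3 = 2" "deg7 4 = 3" "deg7 5 = 3" "deg7 6 = 4" "deg7 7 = 5"
  by (simp_all add: deg7_def)

lemma brk7_raises_degree:
  assumes "\<forall>j. deg7 j \<le> i \<longrightarrow> y $ j = 0"
  shows "\<forall>j. deg7 j \<le> Suc i \<longrightarrow> brk7 x y $ j = 0"
  using assms by (simp add: forall_7 brk7_def)

lemma nilpotent_lie_brk7: "nilpotent_lie brk7"
  by (rule nilpotent_lieI[where P = "\<lambda>i y. \<forall>j. deg7 j \<le> i \<longrightarrow> y $ j = 0" and k = 5])
    (auto simp: brk7_raises_degree vec_eq_iff deg7_def)

definition grading7 :: "real^7 \<Rightarrow> real^7" where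
  "grading7 x = (\<chi> j. real (deg7 j) * x $ j)"

lemma derivation_grading7: "derivation brk7 (\<lambda>x. c *\<^sub>R grading7 x)"
  unfolding derivation_def linear_iff
  by (simp add: vec_eq_iff_7 grading7_def brk7_def algebra_simps)

definition g7 :: "real^7 \<Rightarrow> real^7 \<Rightarrow> real" where
  "g7 x y = x$1*y$1 + x$2*y$2 + 1/3*(x$1*y$2 + x$2*y$1) + x$3*y$3 + 45/52*(x$4*y$4 + x$5*y$5)
     - 15/52*(x$4*y$5 + x$5*y$4) + 45/52*(x$6*y$6) + 2025/2704*(x$7*y$7)"

lemma g7_sum_of_squares:
  "g7 x x = (x$1 + x$2/3)^2 + 8/9*(x$2)^2 + (x$3)^2 + 45/52*(x$4 - x$5/3)^2 + 10/13*(x$5)^2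
     + 45/52*(x$6)^2 + 2025/2704*(x$7)^2"
  unfolding g7_def power2_eq_square by (simp add: field_simps)

lemma inner_product_g7: "inner_product g7"
  unfolding inner_product_def
proof (intro conjI allI impI)
  show "bilinear g7"
    unfolding bilinear_def linear_iff by (simp add: g7_def algebra_simps)
  show "g7 x y = g7 y x" for x y
    by (simp add: g7_def algebra_simps)
  fix x :: "real^7"
  assume "x \<noteq> 0"
  show "g7 x x > 0"
  proof (rule ccontr)
    assume "\<not> g7 x x > 0"
    then have "(x$1 + x$2/3)^2 = 0 \<and> (x$2)^2 = 0 \<and> (x$3)^2 = 0 \<and> (x$4 - x$5/3)^2 = 0
        \<and> (x$5)^2 = 0 \<and> (x$6)^2 = 0 \<and> (x$7)^2 = 0"
      unfolding g7_sum_of_squares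
      using zero_le_power2[of "x$1 + x$2/3"] zero_le_power2[of "x$2"] zero_le_power2[of "x$3"]
        zero_le_power2[of "x$4 - x$5/3"] zero_le_power2[of "x$5"] zero_le_power2[of "x$6"]
        zero_le_power2[of "x$7"]
      by (intro conjI; linarith)
    with \<open>x \<noteq> 0\<close> show False
      by (simp add: vec_eq_iff_7)
  qed
qed

definition LC7 :: "real^7 \<Rightarrow> real^7 \<Rightarrow> real^7" where
  "LC7 X Y = vector [
     3/16 * X$1 * Y$3 + 9/16 * X$2 * Y$3 + 3/16 * X$3 * Y$1 + 9/16 * X$3 * Y$2
       + 225/416 * X$3 * Y$4 - 135/416 * X$3 * Y$5 + 225/416 * X$4 * Y$3 + 405/832 * X$4 * Y$6
       - 135/416 * X$5 * Y$3 - 135/832 * X$5 * Y$6 + 405/832 * X$6 * Y$4 - 135/832 * X$6 * Y$5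
       + 6075/21632 * X$6 * Y$7 + 6075/21632 * X$7 * Y$6,
     - 9/16 * X$1 * Y$3 - 3/16 * X$2 * Y$3 - 9/16 * X$3 * Y$1 - 3/16 * X$3 * Y$2
       - 135/416 * X$3 * Y$4 + 225/416 * X$3 * Y$5 - 135/416 * X$4 * Y$3 - 135/832 * X$4 * Y$6
       + 225/416 * X$5 * Y$3 + 405/832 * X$5 * Y$6 - 135/832 * X$6 * Y$4 + 405/832 * X$6 * Y$5
       + 6075/21632 * X$6 * Y$7 + 6075/21632 * X$7 * Y$6,
     1/2 * X$1 * Y$2 - 45/104 * X$1 * Y$4 + 15/104 * X$1 * Y$5 - 1/2 * X$2 * Y$1
       + 15/104 * X$2 * Y$4 - 45/104 * X$2 * Y$5 - 45/104 * X$4 * Y$1 + 15/104 * X$4 * Y$2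
       - 2025/5408 * X$4 * Y$7 + 15/104 * X$5 * Y$1 - 45/104 * X$5 * Y$2 + 2025/5408 * X$5 * Y$7
       - 2025/5408 * X$7 * Y$4 + 2025/5408 * X$7 * Y$5,
     1/2 * X$1 * Y$3 - 9/16 * X$1 * Y$6 - 3/16 * X$2 * Y$6 - 1/2 * X$3 * Y$1 + 135/416 * X$3 * Y$7
       - 9/16 * X$6 * Y$1 - 3/16 * X$6 * Y$2 + 135/416 * X$7 * Y$3,
     - 3/16 * X$1 * Y$6 + 1/2 * X$2 * Y$3 - 9/16 * X$2 * Y$6 - 1/2 * X$3 * Y$2
       - 135/416 * X$3 * Y$7 - 3/16 * X$6 * Y$1 - 9/16 * X$6 * Y$2 - 135/416 * X$7 * Y$3,
     1/2 * X$1 * Y$4 - 45/104 * X$1 * Y$7 + 1/2 * X$2 * Y$5 - 45/104 * X$2 * Y$7 - 1/2 * X$4 * Y$1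
       - 1/2 * X$5 * Y$2 - 45/104 * X$7 * Y$1 - 45/104 * X$7 * Y$2,
     1/2 * X$1 * Y$6 + 1/2 * X$2 * Y$6 - 1/2 * X$3 * Y$4 + 1/2 * X$3 * Y$5 + 1/2 * X$4 * Y$3
       - 1/2 * X$5 * Y$3 - 1/2 * X$6 * Y$1 - 1/2 * X$6 * Y$2]"

lemma levi_civita_g7: "levi_civita g7 brk7 X Y = LC7 X Y"
  by (rule levi_civita_eqI[OF inner_product_g7])
    (simp add: g7_def LC7_def brk7_def algebra_simps)

lemma ricci_tensor_g7:
  "ricci_tensor g7 brk7 Y Z = g7 ((-45/16) *\<^sub>R Y + (171/208) *\<^sub>R grading7 Y) Z"
  unfolding ricci_tensor_def trace_matrix sum_7 curvature_def levi_civita_g7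
  by (simp add: LC7_def brk7_def axis_def g7_def grading7_def algebra_simps;
      simp add: field_simps)

theorem mainTheorem13:
  shows "einstein_nilradical brk7"
  unfolding einstein_nilradical_def
proof (intro conjI exI)
  show "lie_bracket brk7" by (rule lie_bracket_brk7)
  show "nilpotent_lie brk7" by (rule nilpotent_lie_brk7)
  show "inner_product g7" by (rule inner_product_g7)
  show "nilsoliton g7 brk7"
    using inner_product_g7 derivation_grading7 ricci_tensor_g7 by (rule nilsolitonI)
qed

end
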